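(* Let $M$ be a Hausdorff space, let $E:\mathbb{R}\to\mathcal{T}(M)$ be a strongly regular spectral family, and let $x\in\mathcal{D}(E)$. Then for every quasipoint $\mathfrak{B}_x$ of $\mathcal{T}(M)$ over $x$, \[ f_E(\mathfrak{B}_x)=f_E(x), \] where $f_E(\mathfrak{B}_x):=\inf\{\lambda\in\mathbb{R}\mid E_\lambda\in\mathfrak{B}_x\}$ and $f_E(x):=\inf\{\lambda\in\mathbb{R}\mid x\in E_\lambda\}$.
   Context: $\mathcal{T}(M)$ is the lattice of open subsets of $M$ with $\bigwedge_\alpha U_\alpha=\mathrm{int}\bigcap_\alpha U_\alpha$. A spectral family in $\mathcal{T}(M)$ is a map $E:\mathbb{R}\to\mathcal{T}(M)$ with $E_\lambda\subseteq E_\mu$ for $\lambda\le\mu$, $E_\lambda=\bigwedge_{\mu>\lambda}E_\mu$, $\bigwedge_\lambda E_\lambda=\emptyset$, $\bigcup_\lambda E_\lambda=M$; it is strongly regular if $\overline{E_\lambda}\subseteq E_\mu$ for all $\lambda<\mu$. $\mathcal{D}(E)=\{x\in M\mid\exists\lambda:x\notin E_\lambda\}$. A quasipoint of $\mathcal{T}(M)$ is a maximal dual ideal (maximal nonempty family of open sets not containing $\emptyset$, upward closed, closed under finite intersections); it is over $x$ if $x\in\bigcap_{U\in\mathfrak{B}}\overline{U}$. *)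

theory Defs
  imports "HOL-Analysis.Analysis"
begin

text \<open>The space M is the whole type 'a, of class t2_space (Hausdorff).
  The lattice T(M) consists of the open subsets; its meet of a family is the
  interior of the intersection.\<close>

definition opens_meet :: "'a::topological_space set set \<Rightarrow> 'a set" where
  "opens_meet F = interior (\<Inter> F)"

definition spectral_family :: "(real \<Rightarrow> 'a::topological_space set) \<Rightarrow> bool" where
  "spectral_family E \<longleftrightarrow>
     (\<forall>l. open (E l)) \<and>
     (\<forall>l m. l \<le> m \<longrightarrow> E l \<subseteq> E m) \<and>
     (\<forall>l. E l = opens_meet {E m | m. m > l}) \<and>
     opens_meet (range E) = {} \<and>
     (\<Union>l. E l) = UNIV"

definition strongly_regular :: "(real \<Rightarrow> 'a::topological_space set) \<Rightarrow> bool" where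
  "strongly_regular E \<longleftrightarrow> (\<forall>l m. l < m \<longrightarrow> closure (E l) \<subseteq> E m)"

definition spec_domain :: "(real \<Rightarrow> 'a set) \<Rightarrow> 'a set" where
  "spec_domain E = {x. \<exists>l. x \<notin> E l}"

definition dual_ideal :: "'a::topological_space set set \<Rightarrow> bool" where
  "dual_ideal B \<longleftrightarrow>
     B \<noteq> {} \<and> (\<forall>U\<in>B. open U) \<and> {} \<notin> B \<and>
     (\<forall>U V. U \<in> B \<and> open V \<and> U \<subseteq> V \<longrightarrow> V \<in> B) \<and>
     (\<forall>U V. U \<in> B \<and> V \<in> B \<longrightarrow> U \<inter> V \<in> B)"

definition quasipoint :: "'a::topological_space set set \<Rightarrow> bool" where
  "quasipoint B \<longleftrightarrow> dual_ideal B \<and> (\<forall>C. dual_ideal C \<and> B \<subseteq> C \<longrightarrow> C = B)"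

definition quasipoint_over :: "'a::topological_space set set \<Rightarrow> 'a \<Rightarrow> bool" where
  "quasipoint_over B x \<longleftrightarrow> quasipoint B \<and> x \<in> (\<Inter>U\<in>B. closure U)"

definition fE_qp :: "(real \<Rightarrow> 'a set) \<Rightarrow> 'a set set \<Rightarrow> real" where
  "fE_qp E B = Inf {l. E l \<in> B}"

definition fE_pt :: "(real \<Rightarrow> 'a set) \<Rightarrow> 'a \<Rightarrow> real" where
  "fE_pt E x = Inf {l. x \<in> E l}"

end

theory Submission
  imports Defs
begin

text \<open>For \<open>\<lambda> > f\<^sub>E(x)\<close> the open set \<open>E\<^sub>\<lambda>\<close> is a neighbourhood of \<open>x\<close>, and a
  maximal dual ideal over \<open>x\<close> contains every open neighbourhood of \<open>x\<close>, so \<open>E\<^sub>\<lambda> \<in> B\<close>.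
  For \<open>\<lambda> < f\<^sub>E(x)\<close>, \<open>E\<^sub>\<lambda> \<in> B\<close> would give \<open>x \<in> closure E\<^sub>\<lambda> \<subseteq> E\<^sub>\<mu>\<close> for some
  \<open>\<lambda> < \<mu> < f\<^sub>E(x)\<close> by strong regularity, which is impossible. Hence both infima are
  the same threshold.\<close>

lemma Inf_eq_threshold:
  fixes f :: "'a::{conditionally_complete_linorder, dense_linorder, no_top}"
  assumes above: "\<And>l. f < l \<Longrightarrow> l \<in> T"
    and below: "\<And>l. l < f \<Longrightarrow> l \<notin> T"
  shows "Inf T = f"
proof (rule cInf_eq_non_empty)
  show "T \<noteq> {}" using above gt_ex[of f] by blast
  show "f \<le> t" if "t \<in> T" for t
    using below[of t] that leI by blast
  show "y \<le> f" if lower: "\<And>t. t \<in> T \<Longrightarrow> y \<le> t" for y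
  proof (rule ccontr)
    assume "\<not> y \<le> f"
    then have "f < y" by simp
    then obtain z where "f < z" "z < y" using dense by blast
    moreover have "y \<le> z" using lower above calculation(1) by blast
    ultimately show False by simp
  qed
qed

lemma dual_ideal_Int:
  assumes "dual_ideal B" "U \<in> B" "V \<in> B"
  shows "U \<inter> V \<in> B"
proof -
  have "\<forall>U V. U \<in> B \<and> V \<in> B \<longrightarrow> U \<inter> V \<in> B"
    using assms(1) unfolding dual_ideal_def by (elim conjE)
  then show ?thesis using assms(2,3) by blast
qed

lemma dual_ideal_ex_mem:
  assumes "dual_ideal B"
  shows "\<exists>U. U \<in> B"
proof -
  have "B \<noteq> {}"
    using assms unfolding dual_ideal_def by (elim conjE)
  then show ?thesis by blast
qed

lemma dual_ideal_trace:
  assumes "dual_ideal B" "open W" and meets: "\<And>U. U \<in> B \<Longrightarrow> U \<inter> W \<noteq> {}"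
  shows "dual_ideal {V. open V \<and> (\<exists>U\<in>B. U \<inter> W \<subseteq> V)}" (is "dual_ideal ?C")
  unfolding dual_ideal_def
proof (intro conjI allI impI ballI)
  show "?C \<noteq> {}"
    using dual_ideal_ex_mem[OF assms(1)] \<open>open W\<close> by auto
  show "{} \<notin> ?C"
    using meets by auto
  show "open V" if "V \<in> ?C" for V
    using that by simp
  show "V \<in> ?C" if "U \<in> ?C \<and> open V \<and> U \<subseteq> V" for U V
    using that by auto
  show "U \<inter> V \<in> ?C" if UV: "U \<in> ?C \<and> V \<in> ?C" for U V
  proof -
    obtain U' V' where "U' \<in> B" "V' \<in> B" "U' \<inter> W \<subseteq> U" "V' \<inter> W \<subseteq> V"
      using UV by blast
    then have "U' \<inter> V' \<in> B" "U' \<inter> V' \<inter> W \<subseteq> U \<inter> V"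
      using dual_ideal_Int[OF assms(1)] by auto
    then show ?thesis using UV by auto
  qed
qed

lemma dual_ideal_open:
  assumes "dual_ideal B" "U \<in> B"
  shows "open U"
proof -
  have "\<forall>U\<in>B. open U"
    using assms(1) unfolding dual_ideal_def by (elim conjE)
  then show ?thesis using assms(2) by blast
qed

lemma open_mem_quasipoint_over:
  assumes "quasipoint_over B x" "open W" "x \<in> W"
  shows "W \<in> B"
proof -
  have "dual_ideal B" and maximal: "\<And>C. dual_ideal C \<Longrightarrow> B \<subseteq> C \<Longrightarrow> C = B"
    and x_closure: "\<And>U. U \<in> B \<Longrightarrow> x \<in> closure U"
    using assms(1) unfolding quasipoint_over_def quasipoint_def by auto
  define C where "C = {V. open V \<and> (\<exists>U\<in>B. U \<inter> W \<subseteq> V)}"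
  have "U \<inter> W \<noteq> {}" if "U \<in> B" for U
    using x_closure[OF that] assms(2,3) open_Int_closure_eq_empty by blast
  then have "dual_ideal C"
    unfolding C_def using dual_ideal_trace[OF \<open>dual_ideal B\<close> assms(2)] by blast
  moreover have "B \<subseteq> C"
    unfolding C_def using dual_ideal_open[OF \<open>dual_ideal B\<close>] by blast
  ultimately have "C = B" using maximal by blast
  moreover have "W \<in> C"
    unfolding C_def using dual_ideal_ex_mem[OF \<open>dual_ideal B\<close>] assms(2) by blast
  ultimately show ?thesis by simp
qed

lemma spectral_family_open:
  assumes "spectral_family E"
  shows "open (E l)"
proof -
  have "\<forall>l. open (E l)"
    using assms unfolding spectral_family_def by (elim conjE)
  then show ?thesis by blast
qed

lemma spectral_family_mono:
  assumes "spectral_family E" "l \<le> m"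
  shows "E l \<subseteq> E m"
proof -
  have "\<forall>l m. l \<le> m \<longrightarrow> E l \<subseteq> E m"
    using assms(1) unfolding spectral_family_def by (elim conjE)
  then show ?thesis using assms(2) by blast
qed

lemma spectral_family_covers:
  assumes "spectral_family E"
  shows "\<exists>l. x \<in> E l"
proof -
  have "(\<Union>l. E l) = UNIV"
    using assms unfolding spectral_family_def by (elim conjE)
  then show ?thesis by blast
qed

lemma bdd_below_spec_levels:
  assumes "spectral_family E" "x \<in> spec_domain E"
  shows "bdd_below {l. x \<in> E l}"
proof -
  obtain l0 where "x \<notin> E l0" using assms(2) unfolding spec_domain_def by blast
  have "l0 \<le> l" if "x \<in> E l" for l
  proof (rule ccontr)
    assume "\<not> l0 \<le> l"
    then have "E l \<subseteq> E l0" using spectral_family_mono[OF assms(1)] by simp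
    then show False using that \<open>x \<notin> E l0\<close> by blast
  qed
  then show ?thesis by (intro bdd_belowI) simp
qed

lemma mem_imp_fE_pt_le:
  assumes "spectral_family E" "x \<in> spec_domain E" "x \<in> E l"
  shows "fE_pt E x \<le> l"
  unfolding fE_pt_def
  using cInf_lower[OF _ bdd_below_spec_levels[OF assms(1,2)], of l] assms(3) by simp

lemma fE_pt_less_imp_mem:
  assumes "spectral_family E" "x \<in> spec_domain E" "fE_pt E x < l"
  shows "x \<in> E l"
proof -
  have "{l. x \<in> E l} \<noteq> {}"
    using spectral_family_covers[OF assms(1)] by blast
  moreover have "Inf {l. x \<in> E l} < l"
    using assms(3) unfolding fE_pt_def .
  ultimately obtain m where "x \<in> E m" "m < l"
    using cInf_less_iff[OF _ bdd_below_spec_levels[OF assms(1,2)]] by blast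
  then show ?thesis using spectral_family_mono[OF assms(1), of m l] by auto
qed

theorem proposition2p44:
  fixes E :: "real \<Rightarrow> 'a::t2_space set" and x :: 'a and B :: "'a set set"
  assumes "spectral_family E" and "strongly_regular E"
    and "x \<in> spec_domain E"
    and "quasipoint_over B x"
  shows "fE_qp E B = fE_pt E x"
  unfolding fE_qp_def
proof (rule Inf_eq_threshold)
  show "l \<in> {l. E l \<in> B}" if "fE_pt E x < l" for l
    using open_mem_quasipoint_over[OF assms(4) spectral_family_open[OF assms(1)]]
      fE_pt_less_imp_mem[OF assms(1,3) that] by blast
  show "l \<notin> {l. E l \<in> B}" if "l < fE_pt E x" for l
  proof
    assume "l \<in> {l. E l \<in> B}"
    then have "x \<in> closure (E l)"
      using assms(4) unfolding quasipoint_over_def by blast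
    obtain m where "l < m" "m < fE_pt E x" using dense[OF \<open>l < fE_pt E x\<close>] by blast
    then have "x \<in> E m"
      using assms(2) \<open>x \<in> closure (E l)\<close> unfolding strongly_regular_def by blast
    then show False
      using mem_imp_fE_pt_le[OF assms(1,3)] \<open>m < fE_pt E x\<close> by fastforce
  qed
qed

end
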